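(* Let $x\in\mathcal{X}$. Then $x$ is bilevel feasible if and only if $c^\top x = g(x_{\mathcal{A}_1})$.
   Context: Single-commodity network pricing setting: $G=(\mathcal{V},\mathcal{A})$ is a directed graph with arc costs $c\ge0$, arcs partitioned into a nonempty set $\mathcal{A}_1\subsetneq\mathcal{A}$ of tolled arcs and toll-free arcs $\mathcal{A}_2=\mathcal{A}\setminus\mathcal{A}_1$, $n=|\mathcal{A}_1|$; $N$ is the node–arc incidence matrix; there is one commodity with origin $o$ and destination $d$ and an $o$–$d$ path of toll-free arcs exists; $b_o=1$, $b_d=-1$, $b_i=0$ otherwise. Let $\mathcal{X}=\{x\in\mathbb{R}^{\mathcal{A}}: Nx=b,\ x\ge0\}$ and, for $x\in\mathbb{R}^{\mathcal{A}}$, let $x_{\mathcal{A}_1}\in\mathbb{R}^n$ be its restriction to $\mathcal{A}_1$. Define $f:\mathbb{R}^n\to\mathbb{R}\cup\{-\infty\}$ by $f(t)=\min\{c^\top x+t^\top x_{\mathcal{A}_1}: x\in\mathcal{X}\}$ for $t\ge0$ and $f(t)=-\infty$ otherwise, and $g(w)=\sup_{t\in\mathbb{R}^n}\{f(t)-t^\top w\}$ for $w\in\mathbb{R}^n$. A point $x\in\mathcal{X}$ is called bilevel feasible if the hyperplane $\{(t,z)\in\mathbb{R}^n\times\mathbb{R}: z=-c^\top x-t^\top x_{\mathcal{A}_1}\}$ supports the epigraph $\operatorname{epi}(-f)$, i.e. $\operatorname{epi}(-f)\subseteq\{(t,z): z\ge -c^\top x - t^\top x_{\mathcal{A}_1}\}$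 and the hyperplane meets $\operatorname{epi}(-f)$. *)

theory Defs
  imports "HOL-Analysis.Analysis"
begin

text \<open>Arcs are the elements of a finite type 'a (so the arc set is UNIV);
  each arc has a tail and a head vertex.
  Tolls are functions 'a => real of which only the coordinates in A1 matter.\<close>

text \<open>x in X : N x = b, x >= 0 (N node-arc incidence matrix: +1 at tail, -1 at head).\<close>
definition flow_feasible ::
  "('a::finite \<Rightarrow> 'v) \<Rightarrow> ('a \<Rightarrow> 'v) \<Rightarrow> 'v \<Rightarrow> 'v \<Rightarrow> ('a \<Rightarrow> real) \<Rightarrow> bool" where
  "flow_feasible tail head orig dest x \<longleftrightarrow>
     (\<forall>a. 0 \<le> x a) \<and>
     (\<forall>i. (\<Sum>a\<in>{a. tail a = i}. x a) - (\<Sum>a\<in>{a. head a = i}. x a)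
          = (if i = orig then 1 else if i = dest then -1 else 0))"

fun is_path :: "('a \<Rightarrow> 'v) \<Rightarrow> ('a \<Rightarrow> 'v) \<Rightarrow> 'v \<Rightarrow> 'a list \<Rightarrow> 'v \<Rightarrow> bool" where
  "is_path tail head u [] v \<longleftrightarrow> u = v"
| "is_path tail head u (a # as) v \<longleftrightarrow> tail a = u \<and> is_path tail head (head a) as v"

definition leader_cost ::
  "('a::finite \<Rightarrow> real) \<Rightarrow> 'a set \<Rightarrow> ('a \<Rightarrow> real) \<Rightarrow> ('a \<Rightarrow> real) \<Rightarrow> real" where
  "leader_cost c A1 t x = (\<Sum>a\<in>UNIV. c a * x a) + (\<Sum>a\<in>A1. t a * x a)"

definition pricing_f ::
  "('a::finite \<Rightarrow> real) \<Rightarrow> 'a set \<Rightarrow> ('a \<Rightarrow> 'v) \<Rightarrow> ('a \<Rightarrow> 'v) \<Rightarrow> 'v \<Rightarrow> 'v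
     \<Rightarrow> ('a \<Rightarrow> real) \<Rightarrow> ereal" where
  "pricing_f c A1 tail head orig dest t =
     (if (\<forall>a\<in>A1. 0 \<le> t a)
      then Inf {ereal (leader_cost c A1 t x) | x. flow_feasible tail head orig dest x}
      else -\<infinity>)"

definition pricing_g ::
  "('a::finite \<Rightarrow> real) \<Rightarrow> 'a set \<Rightarrow> ('a \<Rightarrow> 'v) \<Rightarrow> ('a \<Rightarrow> 'v) \<Rightarrow> 'v \<Rightarrow> 'v
     \<Rightarrow> ('a \<Rightarrow> real) \<Rightarrow> ereal" where
  "pricing_g c A1 tail head orig dest w =
     (SUP t. pricing_f c A1 tail head orig dest t - ereal (\<Sum>a\<in>A1. t a * w a))"

text \<open>Bilevel feasibility: the hyperplane z = -c^T x - t^T x_{A1} supports epi(-f).\<close>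
definition bilevel_feasible ::
  "('a::finite \<Rightarrow> real) \<Rightarrow> 'a set \<Rightarrow> ('a \<Rightarrow> 'v) \<Rightarrow> ('a \<Rightarrow> 'v) \<Rightarrow> 'v \<Rightarrow> 'v
     \<Rightarrow> ('a \<Rightarrow> real) \<Rightarrow> bool" where
  "bilevel_feasible c A1 tail head orig dest x \<longleftrightarrow>
     (\<forall>t (z::real). - pricing_f c A1 tail head orig dest t \<le> ereal z
         \<longrightarrow> - leader_cost c A1 t x \<le> z) \<and>
     (\<exists>t (z::real). - pricing_f c A1 tail head orig dest t \<le> ereal z
         \<and> z = - leader_cost c A1 t x)"

end

theory Submission
  imports Defs
begin

text \<open>For every toll vector t the follower cost of x is an upper bound for f(t), so
  g(x) <= c x, and x is bilevel feasible iff some t >= 0 gives f(t) = c x + t x, i.e. iff the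
  supremum defining g(x) is attained with value c x. For t >= 0 the follower problem is a
  shortest path problem with nonnegative weights; its optimum is a simple o-d path, certified by
  the distance potential from o. Thus f(t) - t x is the minimum of the finitely many affine
  functions t |-> c(P) + t (1_P - x) over simple paths P, and the supremum of such a function over
  the nonnegative orthant is attained whenever it is finite, because finitely generated convex
  cones are closed.\<close>

lemma convex_cone_sum:
  assumes "convex_cone S" "\<And>k. k \<in> K \<Longrightarrow> f k \<in> S"
  shows "sum f K \<in> S"
  using assms(2)
  by (induction K rule: infinite_finite_induct)
     (auto intro: convex_cone_add convex_cone_contains_0[OF assms(1)] assms(1))

lemma convex_cone_hull_image_finite:
  fixes v :: "'k \<Rightarrow> 'b::real_vector"
  assumes "finite K"
  shows "convex_cone hull (v ` K) = {\<Sum>k\<in>K. u k *\<^sub>R v k | u. \<forall>k\<in>K. 0 \<le> u k}"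
    (is "_ = ?C")
proof (rule hull_unique)
  show "v ` K \<subseteq> ?C"
  proof (rule image_subsetI)
    fix k assume "k \<in> K"
    then have "v k = (\<Sum>j\<in>K. indicator {k} j *\<^sub>R v j)"
      using assms by (simp add: Collect_conv_if)
    then show "v k \<in> ?C" by auto
  qed
  show "convex_cone ?C"
    unfolding convex_cone_iff
  proof (safe intro!: CollectI)
    show "\<exists>u. 0 = (\<Sum>k\<in>K. u k *\<^sub>R v k) \<and> (\<forall>k\<in>K. 0 \<le> u k)"
      by (intro exI[of _ "\<lambda>_. 0"]) simp
  next
    fix u u' :: "'k \<Rightarrow> real"
    assume "\<forall>k\<in>K. 0 \<le> u k" "\<forall>k\<in>K. 0 \<le> u' k"
    then show "\<exists>u''. (\<Sum>k\<in>K. u k *\<^sub>R v k) + (\<Sum>k\<in>K. u' k *\<^sub>R v k) = (\<Sum>k\<in>K. u'' k *\<^sub>R v k)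
                 \<and> (\<forall>k\<in>K. 0 \<le> u'' k)"
      by (intro exI[of _ "\<lambda>k. u k + u' k"]) (simp add: scaleR_add_left sum.distrib)
  next
    fix u :: "'k \<Rightarrow> real" and c :: real
    assume "\<forall>k\<in>K. 0 \<le> u k" "0 \<le> c"
    then show "\<exists>u'. c *\<^sub>R (\<Sum>k\<in>K. u k *\<^sub>R v k) = (\<Sum>k\<in>K. u' k *\<^sub>R v k) \<and> (\<forall>k\<in>K. 0 \<le> u' k)"
      by (intro exI[of _ "\<lambda>k. c * u k"]) (simp add: scaleR_sum_right)
  qed
  show "?C \<subseteq> T" if "v ` K \<subseteq> T" "convex_cone T" for T
    using that by (auto intro!: convex_cone_sum convex_cone_scaleR)
qed

lemma closed_nonneg_combinations:
  fixes v :: "'k \<Rightarrow> 'b::euclidean_space"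
  assumes "finite K"
  shows "closed {\<Sum>k\<in>K. u k *\<^sub>R v k | u. \<forall>k\<in>K. 0 \<le> u k}"
  using closed_convex_cone_hull[of "v ` K"] assms by (simp add: convex_cone_hull_image_finite)

(* The levels reached by the concave function t |-> min_i (alpha i + t beta i) on the orthant
   form a closed set, i.e. its supremum is attained when finite. m is such a level iff the
   vector (m - alpha i)_i is a nonnegative combination of the columns (beta i a)_i and the
   negated unit vectors (the slacks), so the set is the preimage of a finitely generated cone. *)
lemma closed_min_affine_levels:
  fixes \<alpha> :: "'i::finite \<Rightarrow> real" and \<beta> :: "'i \<Rightarrow> 'a \<Rightarrow> real"
  assumes "finite A"
  shows "closed {m. \<exists>t. (\<forall>a\<in>A. 0 \<le> t a) \<and> (\<forall>i\<in>I. m \<le> \<alpha> i + (\<Sum>a\<in>A. t a * \<beta> i a))}"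
    (is "closed ?L")
proof -
  define v :: "'a + 'i \<Rightarrow> real^'i" where
    "v = case_sum (\<lambda>a. \<chi> i. if i \<in> I then \<beta> i a else 0) (\<lambda>j. - axis j 1)"
  define K :: "('a + 'i) set" where "K = Inl ` A \<union> range Inr"
  define w where "w m = (\<chi> i. of_bool (i \<in> I) * (m - \<alpha> i))" for m
  have comb: "(\<Sum>k\<in>K. u k *\<^sub>R v k) $ i
      = (if i \<in> I then \<Sum>a\<in>A. u (Inl a) * \<beta> i a else 0) - u (Inr i)" for u i
  proof -
    have "(\<Sum>k\<in>K. u k *\<^sub>R v k) = (\<Sum>k\<in>Inl ` A. u k *\<^sub>R v k) + (\<Sum>k\<in>range Inr. u k *\<^sub>R v k)"
      unfolding K_def using assms by (intro sum.union_disjoint) auto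
    also have "\<dots> = (\<Sum>a\<in>A. u (Inl a) *\<^sub>R v (Inl a)) + (\<Sum>j\<in>UNIV. u (Inr j) *\<^sub>R v (Inr j))"
      by (simp add: sum.reindex)
    finally show ?thesis
      by (simp add: v_def axis_def sum_negf sum_distrib_right if_distrib[of "\<lambda>r. _ * r"] cong: if_cong)
  qed
  define C where "C = {\<Sum>k\<in>K. u k *\<^sub>R v k | u. \<forall>k\<in>K. 0 \<le> u k}"
  have levels_eq: "?L = w -` C"
  proof (intro set_eqI iffI)
    fix m assume "m \<in> ?L"
    then obtain t where t: "\<forall>a\<in>A. 0 \<le> t a" "\<forall>i\<in>I. m \<le> \<alpha> i + (\<Sum>a\<in>A. t a * \<beta> i a)"
      by blast
    define u where "u = case_sum t (\<lambda>i. if i \<in> I then \<alpha> i + (\<Sum>a\<in>A. t a * \<beta> i a) - m else 0)"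
    have "w m = (\<Sum>k\<in>K. u k *\<^sub>R v k)"
      unfolding vec_eq_iff comb by (simp add: w_def u_def)
    moreover have "\<forall>k\<in>K. 0 \<le> u k"
      using t by (auto simp: K_def u_def)
    ultimately show "m \<in> w -` C"
      unfolding C_def by blast
  next
    fix m assume "m \<in> w -` C"
    then obtain u where u: "w m = (\<Sum>k\<in>K. u k *\<^sub>R v k)" "\<forall>k\<in>K. 0 \<le> u k"
      unfolding C_def by blast
    have "m \<le> \<alpha> i + (\<Sum>a\<in>A. u (Inl a) * \<beta> i a)" if "i \<in> I" for i
    proof -
      have "m - \<alpha> i = (\<Sum>a\<in>A. u (Inl a) * \<beta> i a) - u (Inr i)"
        using arg_cong[OF u(1), of "\<lambda>z. z $ i"] that unfolding comb by (simp add: w_def)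
      moreover have "0 \<le> u (Inr i)" using u(2) by (simp add: K_def)
      ultimately show ?thesis by linarith
    qed
    moreover have "\<forall>a\<in>A. 0 \<le> u (Inl a)"
      using u(2) by (simp add: K_def)
    ultimately show "m \<in> ?L"
      by (intro CollectI exI[of _ "\<lambda>a. u (Inl a)"]) blast
  qed
  have "closed C"
    using assms unfolding C_def K_def by (intro closed_nonneg_combinations) simp
  moreover have "continuous_on UNIV w"
    unfolding w_def by (intro continuous_intros)
  ultimately show ?thesis
    unfolding levels_eq by (intro closed_vimage)
qed

lemma is_path_append:
  "is_path tail head u (p @ p') v \<longleftrightarrow> (\<exists>w. is_path tail head u p w \<and> is_path tail head w p' v)"
  by (induction p arbitrary: u) auto

lemma is_path_distinct:
  assumes "is_path tail head u p v"
  shows "\<exists>q. distinct q \<and> is_path tail head u q v \<and> set q \<subseteq> set p"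
  using assms
proof (induction p arbitrary: u)
  case Nil
  then show ?case by auto
next
  case (Cons a p)
  then have tail_a: "tail a = u" and "is_path tail head (head a) p v" by auto
  then obtain q where q: "distinct q" "is_path tail head (head a) q v" "set q \<subseteq> set p"
    using Cons.IH by blast
  show ?case
  proof (cases "a \<in> set q")
    case True
    then obtain q1 q2 where q_split: "q = q1 @ a # q2" by (meson split_list)
    with q obtain w where "is_path tail head w (a # q2) v" by (auto simp: is_path_append)
    with tail_a have "is_path tail head u (a # q2) v" by simp
    with q q_split show ?thesis by (intro exI[of _ "a # q2"]) auto
  next
    case False
    with q tail_a show ?thesis by (intro exI[of _ "a # q"]) auto
  qed
qed

definition simple_paths :: "('a \<Rightarrow> 'v) \<Rightarrow> ('a \<Rightarrow> 'v) \<Rightarrow> 'v \<Rightarrow> 'v \<Rightarrow> 'a list set" where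
  "simple_paths tail head u v = {q. distinct q \<and> is_path tail head u q v}"

lemma finite_simple_paths: "finite (simple_paths (tail :: 'a::finite \<Rightarrow> 'v) head u v)"
  by (rule finite_subset[OF _ finite_subset_distinct[of "UNIV :: 'a set"]])
     (auto simp: simple_paths_def)

lemma simple_paths_nonempty:
  "is_path tail head u p v \<Longrightarrow> simple_paths tail head u v \<noteq> {}"
  using is_path_distinct by (fastforce simp: simple_paths_def)

lemma path_indicator_balance:
  fixes tail head :: "'a::finite \<Rightarrow> 'v"
  assumes "distinct q" "is_path tail head u q v"
  shows "(\<Sum>a | tail a = i. indicator (set q) a) - (\<Sum>a | head a = i. indicator (set q) a)
           = (of_bool (i = u) - of_bool (i = v) :: real)"
  using assms
proof (induction q arbitrary: u)
  case Nil
  then show ?case by simp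
next
  case (Cons a q)
  have indicator_Cons: "indicator (set (a # q)) b = indicator (set q) b + (if b = a then 1 else 0 :: real)"
    for b
    using Cons.prems(1) by (auto simp: indicator_def)
  have sum_Cons: "(\<Sum>b | f b = i. indicator (set (a # q)) b)
      = (\<Sum>b | f b = i. indicator (set q) b) + (of_bool (f a = i) :: real)" for f :: "'a \<Rightarrow> 'v"
    unfolding indicator_Cons sum.distrib by (simp add: sum.delta')
  have "(\<Sum>b | tail b = i. indicator (set q) b) - (\<Sum>b | head b = i. indicator (set q) b)
          = (of_bool (i = head a) - of_bool (i = v) :: real)"
    using Cons by simp
  moreover have "tail a = u" using Cons.prems(2) by simp
  ultimately show ?case
    unfolding sum_Cons by auto
qed

lemma flow_feasible_simple_path:
  fixes tail head :: "'a::finite \<Rightarrow> 'v"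
  assumes "q \<in> simple_paths tail head orig dest" "orig \<noteq> dest"
  shows "flow_feasible tail head orig dest (indicator (set q))"
  using path_indicator_balance[of q tail head orig dest] assms
  by (auto simp: flow_feasible_def simple_paths_def)

lemma flow_cost_ge_potential_difference:
  fixes tail head :: "'a::finite \<Rightarrow> 'v" and \<pi> :: "'v \<Rightarrow> real"
  assumes y: "flow_feasible tail head orig dest y" and "orig \<noteq> dest"
    and potential: "\<And>a. \<pi> (head a) \<le> \<pi> (tail a) + w a"
  shows "\<pi> dest - \<pi> orig \<le> (\<Sum>a\<in>UNIV. w a * y a)"
proof -
  define V where "V = range tail \<union> range head \<union> {orig, dest}"
  have "finite V" by (simp add: V_def)
  have group: "(\<Sum>a\<in>UNIV. y a * \<pi> (f a)) = (\<Sum>v\<in>V. \<pi> v * (\<Sum>a | f a = v. y a))"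
    if "range f \<subseteq> V" for f :: "'a \<Rightarrow> 'v"
  proof -
    have "(\<Sum>a\<in>UNIV. y a * \<pi> (f a)) = (\<Sum>v\<in>V. \<Sum>a | f a = v. y a * \<pi> (f a))"
      using sum.group[of UNIV V f "\<lambda>a. y a * \<pi> (f a)"] \<open>finite V\<close> that by simp
    also have "\<dots> = (\<Sum>v\<in>V. \<pi> v * (\<Sum>a | f a = v. y a))"
      by (intro sum.cong) (auto simp: sum_distrib_left mult.commute)
    finally show ?thesis .
  qed
  have balance: "(\<Sum>a | head a = v. y a) - (\<Sum>a | tail a = v. y a) = of_bool (v = dest) - of_bool (v = orig)"
    for v
  proof -
    have "(\<Sum>a | tail a = v. y a) - (\<Sum>a | head a = v. y a)
        = (if v = orig then 1 else if v = dest then - 1 else 0)"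
      using y by (simp add: flow_feasible_def)
    then show ?thesis
      using \<open>orig \<noteq> dest\<close> by (auto split: if_splits)
  qed
  have "\<pi> dest - \<pi> orig = (\<Sum>v\<in>V. \<pi> v * (of_bool (v = dest) - of_bool (v = orig)))"
    using \<open>finite V\<close> by (simp add: right_diff_distrib sum_subtractf V_def)
  also have "\<dots> = (\<Sum>v\<in>V. \<pi> v * ((\<Sum>a | head a = v. y a) - (\<Sum>a | tail a = v. y a)))"
    by (simp only: balance)
  also have "\<dots> = (\<Sum>a\<in>UNIV. y a * (\<pi> (head a) - \<pi> (tail a)))"
    using group[of head] group[of tail]
    by (simp add: V_def image_subset_iff right_diff_distrib sum_subtractf)
  also have "\<dots> \<le> (\<Sum>a\<in>UNIV. w a * y a)"
  proof (intro sum_mono)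
    fix a
    have "0 \<le> y a" using y by (simp add: flow_feasible_def)
    moreover have "\<pi> (head a) - \<pi> (tail a) \<le> w a" using potential[of a] by simp
    ultimately show "y a * (\<pi> (head a) - \<pi> (tail a)) \<le> w a * y a"
      by (metis mult.commute mult_right_mono)
  qed
  finally show ?thesis .
qed

(* Unreachable vertices get the total weight, which bounds every path weight when w is
   nonnegative; this keeps the triangle inequality true for them. *)
definition path_dist ::
  "('a::finite \<Rightarrow> 'v) \<Rightarrow> ('a \<Rightarrow> 'v) \<Rightarrow> ('a \<Rightarrow> real) \<Rightarrow> 'v \<Rightarrow> 'v \<Rightarrow> real" where
  "path_dist tail head w u v =
     (if simple_paths tail head u v = {} then sum w UNIV
      else Min ((\<lambda>q. sum w (set q)) ` simple_paths tail head u v))"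

lemma path_dist_le:
  "q \<in> simple_paths tail head u v \<Longrightarrow> path_dist tail head w u v \<le> sum w (set q)"
  unfolding path_dist_def by (auto intro!: Min_le simp: finite_simple_paths)

lemma path_dist_attained:
  assumes "simple_paths tail head u v \<noteq> {}"
  shows "\<exists>q\<in>simple_paths tail head u v. path_dist tail head w u v = sum w (set q)"
proof -
  have "Min ((\<lambda>q. sum w (set q)) ` simple_paths tail head u v)
          \<in> (\<lambda>q. sum w (set q)) ` simple_paths tail head u v"
    using assms by (intro Min_in) (auto simp: finite_simple_paths)
  then show ?thesis
    using assms unfolding path_dist_def by auto
qed

lemma path_dist_self:
  assumes "\<And>a. 0 \<le> w a"
  shows "path_dist tail head w u u = 0"
proof -
  have "[] \<in> simple_paths tail head u u"
    by (simp add: simple_paths_def)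
  then obtain q where "path_dist tail head w u u = sum w (set q)"
    using path_dist_attained[of tail head u u w] by blast
  then have "0 \<le> path_dist tail head w u u"
    using assms by (simp add: sum_nonneg)
  moreover have "path_dist tail head w u u \<le> 0"
    using path_dist_le[OF \<open>[] \<in> simple_paths tail head u u\<close>] by simp
  ultimately show ?thesis by simp
qed

lemma path_dist_triangle:
  assumes "\<And>a. 0 \<le> w a"
  shows "path_dist tail head w u (head a) \<le> path_dist tail head w u (tail a) + w a"
proof (cases "simple_paths tail head u (tail a) = {}")
  case True
  then have "path_dist tail head w u (tail a) = sum w UNIV"
    by (simp add: path_dist_def)
  moreover have "path_dist tail head w u (head a) \<le> sum w UNIV"
  proof (cases "simple_paths tail head u (head a) = {}")
    case False
    then obtain q where "path_dist tail head w u (head a) = sum w (set q)"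
      using path_dist_attained[of tail head u "head a" w] by blast
    moreover have "sum w (set q) \<le> sum w UNIV"
      by (rule sum_mono2) (use assms in auto)
    ultimately show ?thesis by simp
  qed (simp add: path_dist_def)
  ultimately show ?thesis
    using assms[of a] by simp
next
  case False
  then obtain q where q: "q \<in> simple_paths tail head u (tail a)"
    and dist_q: "path_dist tail head w u (tail a) = sum w (set q)"
    using path_dist_attained[of tail head u "tail a" w] by blast
  then have "is_path tail head u (q @ [a]) (head a)"
    by (auto simp: simple_paths_def is_path_append)
  from is_path_distinct[OF this] obtain q'
    where q': "distinct q'" "is_path tail head u q' (head a)" "set q' \<subseteq> set (q @ [a])"
    by blast
  have "path_dist tail head w u (head a) \<le> sum w (set q')"
    using q' by (intro path_dist_le) (simp add: simple_paths_def)
  also have "\<dots> \<le> sum w (insert a (set q))"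
    using q' assms by (intro sum_mono2) auto
  also have "\<dots> \<le> sum w (set q) + w a"
    using assms by (simp add: sum.insert_if)
  finally show ?thesis
    using dist_q by simp
qed

lemma simple_path_min_cost_flow:
  fixes tail head :: "'a::finite \<Rightarrow> 'v"
  assumes "\<And>a. 0 \<le> w a" "orig \<noteq> dest" "simple_paths tail head orig dest \<noteq> {}"
  obtains q where "q \<in> simple_paths tail head orig dest"
    "\<And>y. flow_feasible tail head orig dest y \<Longrightarrow> sum w (set q) \<le> (\<Sum>a\<in>UNIV. w a * y a)"
proof -
  obtain q where q: "q \<in> simple_paths tail head orig dest"
    and dist_q: "path_dist tail head w orig dest = sum w (set q)"
    using path_dist_attained[OF assms(3), of w] by blast
  have "sum w (set q) \<le> (\<Sum>a\<in>UNIV. w a * y a)" if "flow_feasible tail head orig dest y" for y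
  proof -
    have "path_dist tail head w orig dest - path_dist tail head w orig orig \<le> (\<Sum>a\<in>UNIV. w a * y a)"
      using that assms(2) by (rule flow_cost_ge_potential_difference) (rule path_dist_triangle[OF assms(1)])
    then show ?thesis
      by (simp add: dist_q path_dist_self[OF assms(1)])
  qed
  with q that show ?thesis by blast
qed

lemma leader_cost_weighted:
  "leader_cost c A1 t y = (\<Sum>a\<in>UNIV. (c a + of_bool (a \<in> A1) * t a) * y a)"
  by (simp add: leader_cost_def distrib_right sum.distrib mult.assoc)

lemma pricing_f_le_leader_cost:
  "flow_feasible tail head orig dest y
     \<Longrightarrow> pricing_f c A1 tail head orig dest t \<le> ereal (leader_cost c A1 t y)"
  by (auto simp: pricing_f_def intro!: Inf_lower)

lemma pricing_f_not_nonneg: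
  "\<not> (\<forall>a\<in>A1. 0 \<le> t a) \<Longrightarrow> pricing_f c A1 tail head orig dest t = -\<infinity>"
  unfolding pricing_f_def by auto

lemma pricing_f_simple_path:
  fixes c :: "'a::finite \<Rightarrow> real"
  assumes "\<And>a. 0 \<le> c a" "\<forall>a\<in>A1. 0 \<le> t a" "orig \<noteq> dest"
    and "simple_paths tail head orig dest \<noteq> {}"
  obtains q where "q \<in> simple_paths tail head orig dest"
    and "pricing_f c A1 tail head orig dest t = ereal (leader_cost c A1 t (indicator (set q)))"
proof -
  define w where "w a = c a + of_bool (a \<in> A1) * t a" for a
  have "0 \<le> w a" for a
    using assms(1,2) by (simp add: w_def)
  then obtain q where q: "q \<in> simple_paths tail head orig dest"
    and q_min: "\<And>y. flow_feasible tail head orig dest y \<Longrightarrow> sum w (set q) \<le> (\<Sum>a\<in>UNIV. w a * y a)"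
    using simple_path_min_cost_flow assms(3,4) by metis
  have cost_q: "leader_cost c A1 t (indicator (set q)) = sum w (set q)"
    by (simp add: leader_cost_weighted w_def)
  have "ereal (leader_cost c A1 t (indicator (set q))) \<le> pricing_f c A1 tail head orig dest t"
    unfolding pricing_f_def using assms(2) q_min
    by (auto simp: cost_q leader_cost_weighted w_def intro!: Inf_greatest)
  moreover have "pricing_f c A1 tail head orig dest t \<le> ereal (leader_cost c A1 t (indicator (set q)))"
    using flow_feasible_simple_path[OF q assms(3)] by (rule pricing_f_le_leader_cost)
  ultimately have "pricing_f c A1 tail head orig dest t = ereal (leader_cost c A1 t (indicator (set q)))"
    by (rule antisym[rotated])
  with q show ?thesis
    by (rule that)
qed

lemma bilevel_feasible_iff:
  assumes "flow_feasible tail head orig dest x"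
  shows "bilevel_feasible c A1 tail head orig dest x \<longleftrightarrow>
           (\<exists>t. ereal (leader_cost c A1 t x) \<le> pricing_f c A1 tail head orig dest t)"
proof
  assume "bilevel_feasible c A1 tail head orig dest x"
  then obtain t where "- pricing_f c A1 tail head orig dest t \<le> - ereal (leader_cost c A1 t x)"
    unfolding bilevel_feasible_def by auto
  then show "\<exists>t. ereal (leader_cost c A1 t x) \<le> pricing_f c A1 tail head orig dest t"
    by (simp only: ereal_minus_le_minus) blast
next
  assume "\<exists>t. ereal (leader_cost c A1 t x) \<le> pricing_f c A1 tail head orig dest t"
  then obtain t where "ereal (leader_cost c A1 t x) \<le> pricing_f c A1 tail head orig dest t"
    by blast
  then have t: "- pricing_f c A1 tail head orig dest t \<le> ereal (- leader_cost c A1 t x)"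
    by (simp flip: uminus_ereal.simps(1))
  have "- leader_cost c A1 t' x \<le> z"
    if "- pricing_f c A1 tail head orig dest t' \<le> ereal z" for t' z
  proof -
    have "- ereal (leader_cost c A1 t' x) \<le> - pricing_f c A1 tail head orig dest t'"
      by (simp only: ereal_minus_le_minus pricing_f_le_leader_cost[OF assms])
    from order_trans[OF this that] show ?thesis
      by simp
  qed
  with t show "bilevel_feasible c A1 tail head orig dest x"
    unfolding bilevel_feasible_def by blast
qed

lemma pricing_g_le_cost:
  assumes "flow_feasible tail head orig dest x"
  shows "pricing_g c A1 tail head orig dest x \<le> ereal (\<Sum>a\<in>UNIV. c a * x a)"
  unfolding pricing_g_def
proof (rule SUP_least)
  fix t
  have "pricing_f c A1 tail head orig dest t
          \<le> ereal (\<Sum>a\<in>UNIV. c a * x a) + ereal (\<Sum>a\<in>A1. t a * x a)"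
    using pricing_f_le_leader_cost[OF assms] by (simp add: leader_cost_def)
  then show "pricing_f c A1 tail head orig dest t - ereal (\<Sum>a\<in>A1. t a * x a)
               \<le> ereal (\<Sum>a\<in>UNIV. c a * x a)"
    by (simp add: ereal_minus_le)
qed

lemma pricing_g_eq_cost_attained:
  fixes c :: "'a::finite \<Rightarrow> real"
  assumes g_eq: "ereal (\<Sum>a\<in>UNIV. c a * x a) = pricing_g c A1 tail head orig dest x"
    and "orig \<noteq> dest"
  shows "\<exists>t. (\<forall>a\<in>A1. 0 \<le> t a) \<and> (\<forall>q\<in>simple_paths tail head orig dest.
           leader_cost c A1 t x \<le> leader_cost c A1 t (indicator (set q)))"
proof -
  define cx where "cx = (\<Sum>a\<in>UNIV. c a * x a)"
  define tx where "tx t = (\<Sum>a\<in>A1. t a * x a)" for t :: "'a \<Rightarrow> real"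
  define L where "L = {m. \<exists>t. (\<forall>a\<in>A1. 0 \<le> t a) \<and> (\<forall>T\<in>set ` simple_paths tail head orig dest.
                       m \<le> sum c T + (\<Sum>a\<in>A1. t a * (indicator T a - x a)))}"
  have affine_eq: "sum c (set q) + (\<Sum>a\<in>A1. t a * (indicator (set q) a - x a))
                     = leader_cost c A1 t (indicator (set q)) - tx t" for t q
    by (simp add: leader_cost_def tx_def right_diff_distrib sum_subtractf)
  have "closed L"
    unfolding L_def by (rule closed_min_affine_levels) simp
  moreover have "{..<cx} \<subseteq> L"
  proof
    fix m assume "m \<in> {..<cx}"
    then have "ereal m < (SUP t. pricing_f c A1 tail head orig dest t - ereal (tx t))"
      using g_eq[unfolded pricing_g_def, symmetric] by (simp add: cx_def tx_def)
    then obtain t where t: "ereal m < pricing_f c A1 tail head orig dest t - ereal (tx t)"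
      by (auto simp: less_SUP_iff)
    then have "pricing_f c A1 tail head orig dest t \<noteq> -\<infinity>"
      by auto
    then have "\<forall>a\<in>A1. 0 \<le> t a"
      using pricing_f_not_nonneg[of A1 t c tail head orig dest] by blast
    moreover have "m \<le> leader_cost c A1 t (indicator (set q)) - tx t"
      if "q \<in> simple_paths tail head orig dest" for q
    proof -
      have "pricing_f c A1 tail head orig dest t \<le> ereal (leader_cost c A1 t (indicator (set q)))"
        using flow_feasible_simple_path[OF that \<open>orig \<noteq> dest\<close>] by (rule pricing_f_le_leader_cost)
      moreover have "ereal (m + tx t) < pricing_f c A1 tail head orig dest t"
        using t by (simp add: ereal_less_minus)
      ultimately have "ereal (m + tx t) < ereal (leader_cost c A1 t (indicator (set q)))"
        by (rule order.strict_trans2[rotated])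
      then show ?thesis
        by simp
    qed
    ultimately show "m \<in> L"
      unfolding L_def by (intro CollectI exI[of _ t]) (auto simp: affine_eq)
  qed
  ultimately have "cx \<in> L"
    using closure_minimal[of "{..<cx}" L] by auto
  then obtain t where "\<forall>a\<in>A1. 0 \<le> t a"
    and "\<forall>q\<in>simple_paths tail head orig dest. cx \<le> leader_cost c A1 t (indicator (set q)) - tx t"
    unfolding L_def by (auto simp: affine_eq)
  moreover have "leader_cost c A1 t x = cx + tx t"
    by (simp add: leader_cost_def cx_def tx_def)
  ultimately show ?thesis
    by (intro exI[of _ t]) auto
qed

theorem lemma2:
  fixes c :: "'a::finite \<Rightarrow> real" and A1 :: "'a set"
    and tail head :: "'a \<Rightarrow> 'v" and orig dest :: 'v and x :: "'a \<Rightarrow> real"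
  assumes c_nonneg: "\<forall>a. 0 \<le> c a"
    and A1_ne: "A1 \<noteq> {}" and A1_proper: "A1 \<noteq> UNIV"
    and od: "orig \<noteq> dest"
    and tollfree_path: "\<exists>p. is_path tail head orig p dest \<and> set p \<inter> A1 = {}"
    and x_in_X: "flow_feasible tail head orig dest x"
  shows "bilevel_feasible c A1 tail head orig dest x \<longleftrightarrow>
         ereal (\<Sum>a\<in>UNIV. c a * x a) = pricing_g c A1 tail head orig dest x"
proof -
  from tollfree_path obtain p where "is_path tail head orig p dest"
    by blast
  then have paths: "simple_paths tail head orig dest \<noteq> {}"
    by (rule simple_paths_nonempty)
  have "(\<exists>t. ereal (leader_cost c A1 t x) \<le> pricing_f c A1 tail head orig dest t)
          \<longleftrightarrow> ereal (\<Sum>a\<in>UNIV. c a * x a) = pricing_g c A1 tail head orig dest x"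
  proof
    assume "\<exists>t. ereal (leader_cost c A1 t x) \<le> pricing_f c A1 tail head orig dest t"
    then obtain t where "ereal (leader_cost c A1 t x) \<le> pricing_f c A1 tail head orig dest t"
      by blast
    then have "ereal (\<Sum>a\<in>UNIV. c a * x a)
                 \<le> pricing_f c A1 tail head orig dest t - ereal (\<Sum>a\<in>A1. t a * x a)"
      by (simp add: ereal_le_minus leader_cost_def)
    also have "\<dots> \<le> pricing_g c A1 tail head orig dest x"
      unfolding pricing_g_def by (rule SUP_upper) simp
    finally show "ereal (\<Sum>a\<in>UNIV. c a * x a) = pricing_g c A1 tail head orig dest x"
      using pricing_g_le_cost[OF x_in_X, of c A1] by (rule antisym)
  next
    assume "ereal (\<Sum>a\<in>UNIV. c a * x a) = pricing_g c A1 tail head orig dest x"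
    from pricing_g_eq_cost_attained[OF this od] obtain t where t_nonneg: "\<forall>a\<in>A1. 0 \<le> t a"
      and x_cheapest: "\<forall>q\<in>simple_paths tail head orig dest.
                         leader_cost c A1 t x \<le> leader_cost c A1 t (indicator (set q))"
      by blast
    obtain q where "q \<in> simple_paths tail head orig dest"
      and "pricing_f c A1 tail head orig dest t = ereal (leader_cost c A1 t (indicator (set q)))"
      using c_nonneg[rule_format] t_nonneg od paths by (rule pricing_f_simple_path)
    with x_cheapest have "ereal (leader_cost c A1 t x) \<le> pricing_f c A1 tail head orig dest t"
      by simp
    then show "\<exists>t. ereal (leader_cost c A1 t x) \<le> pricing_f c A1 tail head orig dest t"
      by blast
  qed
  then show ?thesis
    using bilevel_feasible_iff[OF x_in_X] by simp
qed

end
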